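(* Let $D$ be a strongly connected tournament and let $S$ be a minimum feedback arc set of $D$ such that the subdigraph $D_S$ arc-induced by $S$ is a directed path. Let $m=|S|$ and $k\ge 2$. Then $D$ is $k$-AW if and only if $\gcd(k,F_{m+2})=1$.
   Context: A tournament is a digraph in which for every pair of distinct vertices $v,w$ exactly one of $vw$, $wv$ is an arc. Strongly connected: for any two vertices there are directed walks in both directions. For an ordering $\sigma=v_1,\dots,v_n$ of $V(D)$, the feedback arc set with respect to $\sigma$ is the set of arcs $v_jv_i\in A(D)$ with $i<j$; a feedback arc set is one with respect to some ordering; a minimum feedback arc set is one of minimum cardinality over all orderings. For $B\subseteq A(D)$, the arc-induced subdigraph $D_B$ has arc set $B$ and vertex set the vertices incident with arcs of $B$. A directed path is a digraph whose vertices can be ordered $u_1,\dots,u_p$ so that its arc set is exactly $\{u_iu_{i+1}:1\le i\le p-1\}$. Fibonacci numbers: $F_0=0,F_1=1,F_j=F_{j-1}+F_{j-2}$. The $k$-lights out game: start with a labeling $V(D)\to\mathbb{Z}_k$; toggling $v$ increases by $1$ mod $k$ the label of $v$ and of every $w$ with $vw\in A(D)$; the game is won when all labels are $0$. $D$ is $k$-AW if every labeling $V(D)\to\mathbb{Z}_k$ can be brought to the all-zero labeling by toggling. *)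

theory Defs
  imports "HOL-Number_Theory.Fib"
begin

definition tournament :: "'a set \<Rightarrow> ('a \<times> 'a) set \<Rightarrow> bool" where
  "tournament V A \<longleftrightarrow> finite V \<and> A \<subseteq> V \<times> V \<and> (\<forall>v. (v, v) \<notin> A) \<and>
     (\<forall>v\<in>V. \<forall>w\<in>V. v \<noteq> w \<longrightarrow> ((v, w) \<in> A \<longleftrightarrow> (w, v) \<notin> A))"

definition strongly_connected :: "'a set \<Rightarrow> ('a \<times> 'a) set \<Rightarrow> bool" where
  "strongly_connected V A \<longleftrightarrow> (\<forall>v\<in>V. \<forall>w\<in>V. (v, w) \<in> A\<^sup>*)"

definition is_ordering :: "'a set \<Rightarrow> 'a list \<Rightarrow> bool" where
  "is_ordering V \<sigma> \<longleftrightarrow> distinct \<sigma> \<and> set \<sigma> = V"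

definition fas_wrt :: "('a \<times> 'a) set \<Rightarrow> 'a list \<Rightarrow> ('a \<times> 'a) set" where
  "fas_wrt A \<sigma> = {(x, y) \<in> A. \<exists>i j. i < j \<and> j < length \<sigma> \<and> \<sigma> ! j = x \<and> \<sigma> ! i = y}"

definition feedback_arc_set :: "'a set \<Rightarrow> ('a \<times> 'a) set \<Rightarrow> ('a \<times> 'a) set \<Rightarrow> bool" where
  "feedback_arc_set V A S \<longleftrightarrow> (\<exists>\<sigma>. is_ordering V \<sigma> \<and> S = fas_wrt A \<sigma>)"

definition min_feedback_arc_set :: "'a set \<Rightarrow> ('a \<times> 'a) set \<Rightarrow> ('a \<times> 'a) set \<Rightarrow> bool" where
  "min_feedback_arc_set V A S \<longleftrightarrow> feedback_arc_set V A S \<and>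
     (\<forall>S'. feedback_arc_set V A S' \<longrightarrow> card S \<le> card S')"

definition arc_verts :: "('a \<times> 'a) set \<Rightarrow> 'a set" where
  "arc_verts B = fst ` B \<union> snd ` B"

definition is_directed_path :: "'a set \<Rightarrow> ('a \<times> 'a) set \<Rightarrow> bool" where
  "is_directed_path W B \<longleftrightarrow> (\<exists>us. distinct us \<and> set us = W \<and>
      B = {(us ! i, us ! Suc i) | i. Suc i < length us})"

text \<open>Lights out: labels in Z_k represented by integers in {0..<k}.\<close>
definition toggle :: "('a \<times> 'a) set \<Rightarrow> int \<Rightarrow> 'a \<Rightarrow> ('a \<Rightarrow> int) \<Rightarrow> ('a \<Rightarrow> int)" where
  "toggle A k v l = (\<lambda>w. if w = v \<or> (v, w) \<in> A then (l w + 1) mod k else l w)"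

definition play :: "('a \<times> 'a) set \<Rightarrow> int \<Rightarrow> 'a list \<Rightarrow> ('a \<Rightarrow> int) \<Rightarrow> ('a \<Rightarrow> int)" where
  "play A k vs l = foldl (\<lambda>l' v. toggle A k v l') l vs"

definition k_AW :: "nat \<Rightarrow> 'a set \<Rightarrow> ('a \<times> 'a) set \<Rightarrow> bool" where
  "k_AW k V A \<longleftrightarrow> (\<forall>l. (\<forall>v\<in>V. l v \<in> {0..<int k}) \<longrightarrow>
     (\<exists>vs. set vs \<subseteq> V \<and> (\<forall>v\<in>V. play A (int k) vs l v = 0)))"

end

theory Submission
  imports Defs "HOL-Number_Theory.Cong" "HOL-Library.FuncSet"
begin

text \<open>Order the vertices by an ordering whose backward arcs are exactly S. Playing each vertex
  a prescribed number of times acts on the labels by a linear map over \<open>\<int>/k\<close>, so D is k-AW iff this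
  map is onto, iff its kernel is trivial. Off the path the in-neighbourhood of the j-th vertex is
  just its set of predecessors, so the prefix sums of a solution vanish there. Minimality of S keeps
  consecutive path vertices apart in the order, so at each path vertex the prefix sum equals the
  number of toggles, and these prefix sums satisfy \<open>x (t+1) = x (t-1) - x t\<close>, i.e.
  \<open>x t = (-1)^t F (t+1) x 0\<close>. The equation at the last path vertex then reads
  \<open>(-1)^m F (m+2) x 0 = \<beta>\<close>, so the map is onto iff \<open>F (m+2)\<close> is a unit modulo k.\<close>

section \<open>Lights out as a linear system modulo k\<close>

text \<open>Playing every vertex u exactly \<open>c u\<close> times adds \<open>toggle_effect V A c w\<close> to the label of w.\<close>

definition toggle_effect :: "'a set \<Rightarrow> ('a \<times> 'a) set \<Rightarrow> ('a \<Rightarrow> int) \<Rightarrow> 'a \<Rightarrow> int" where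
  "toggle_effect V A c w = (\<Sum>u\<in>V. if u = w \<or> (u, w) \<in> A then c u else 0)"

definition toggle_surjective :: "nat \<Rightarrow> 'a set \<Rightarrow> ('a \<times> 'a) set \<Rightarrow> bool" where
  "toggle_surjective k V A \<longleftrightarrow> (\<forall>b. \<exists>c. \<forall>w\<in>V. [toggle_effect V A c w = b w] (mod int k))"

lemma toggle_effect_diff:
  "toggle_effect V A (\<lambda>u. c u - d u) w = toggle_effect V A c w - toggle_effect V A d w"
  unfolding toggle_effect_def by (auto simp: sum_subtractf[symmetric] intro: sum.cong)

lemma toggle_effect_cong:
  assumes "\<And>u. u \<in> V \<Longrightarrow> [c u = d u] (mod k)"
  shows "[toggle_effect V A c w = toggle_effect V A d w] (mod k)"
  unfolding toggle_effect_def by (rule cong_sum) (simp add: assms)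

lemma toggle_effect_cong_eq:
  "(\<And>u. u \<in> V \<Longrightarrow> c u = d u) \<Longrightarrow> toggle_effect V A c w = toggle_effect V A d w"
  unfolding toggle_effect_def by (intro sum.cong) auto

lemma toggle_effect_count_list_Cons:
  assumes "finite V" "v \<in> V"
  shows "toggle_effect V A (\<lambda>u. int (count_list (v # vs) u)) w
       = toggle_effect V A (\<lambda>u. int (count_list vs u)) w + (if v = w \<or> (v, w) \<in> A then 1 else 0)"
proof -
  have "toggle_effect V A (\<lambda>u. int (count_list (v # vs) u)) w
      = (\<Sum>u\<in>V. (if u = w \<or> (u, w) \<in> A then int (count_list vs u) else 0)
                + (if u = v then if v = w \<or> (v, w) \<in> A then 1 else 0 else 0))"
    unfolding toggle_effect_def by (rule sum.cong) auto
  then show ?thesis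
    using assms by (simp add: sum.distrib toggle_effect_def)
qed

lemma play_mod_toggle_effect:
  assumes "finite V" "set vs \<subseteq> V"
  shows "play A k vs l w mod k = (l w + toggle_effect V A (\<lambda>u. int (count_list vs u)) w) mod k"
  using assms(2)
proof (induction vs arbitrary: l)
  case Nil
  then show ?case by (simp add: play_def toggle_effect_def)
next
  case (Cons v vs)
  have "play A k (v # vs) l w mod k
      = (toggle A k v l w + toggle_effect V A (\<lambda>u. int (count_list vs u)) w) mod k"
    using Cons by (simp add: play_def)
  also have "\<dots> = (l w + (if v = w \<or> (v, w) \<in> A then 1 else 0)
                      + toggle_effect V A (\<lambda>u. int (count_list vs u)) w) mod k"
    by (simp add: toggle_def mod_add_left_eq)
  also have "\<dots> = (l w + toggle_effect V A (\<lambda>u. int (count_list (v # vs) u)) w) mod k"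
    using toggle_effect_count_list_Cons[OF assms(1), of v A vs w] Cons.prems
    by (simp add: add_ac del: count_list.simps)
  finally show ?case .
qed

lemma play_range:
  assumes "0 \<le> l w" "l w < k"
  shows "0 \<le> play A k vs l w \<and> play A k vs l w < k"
  using assms by (induction vs arbitrary: l) (simp_all add: play_def toggle_def)

lemma play_eq_0_iff:
  assumes "finite V" "set vs \<subseteq> V" "0 \<le> l w" "l w < k"
  shows "play A k vs l w = 0 \<longleftrightarrow> [l w + toggle_effect V A (\<lambda>u. int (count_list vs u)) w = 0] (mod k)"
proof -
  have "play A k vs l w = play A k vs l w mod k"
    using play_range[of l w k A vs] assms(3,4) by simp
  then show ?thesis
    using play_mod_toggle_effect[OF assms(1,2)] by (simp add: cong_def)
qed

lemma exists_list_with_counts: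
  assumes "finite V"
  shows "\<exists>vs. set vs \<subseteq> V \<and> (\<forall>u\<in>V. count_list vs u = f u)"
  using assms
proof (induction V rule: finite_induct)
  case empty
  show ?case by simp
next
  case (insert x V)
  then obtain vs where "set vs \<subseteq> V" "\<forall>u\<in>V. count_list vs u = f u" by blast
  moreover have "count_list (replicate r x) x = r" for r
    by (induction r) auto
  ultimately show ?case
    using insert.hyps by (intro exI[of _ "replicate (f x) x @ vs"]) (auto simp: count_list_0_iff)
qed

lemma toggle_surjective_if_k_AW:
  assumes V: "finite V" and k: "k \<ge> 1" and aw: "k_AW k V A"
  shows "toggle_surjective k V A"
  unfolding toggle_surjective_def
proof
  fix b :: "'a \<Rightarrow> int"
  define l where "l w = - b w mod int k" for w
  have l: "\<forall>w\<in>V. l w \<in> {0..<int k}"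
    using k by (simp add: l_def)
  then obtain vs where vs: "set vs \<subseteq> V" and won: "\<forall>w\<in>V. play A (int k) vs l w = 0"
    using aw unfolding k_AW_def by blast
  have "[toggle_effect V A (\<lambda>u. int (count_list vs u)) w = b w] (mod int k)" if w: "w \<in> V" for w
  proof -
    have "[l w + toggle_effect V A (\<lambda>u. int (count_list vs u)) w = 0] (mod int k)"
      using won w l play_eq_0_iff[OF V vs] by auto
    then have "[- b w + toggle_effect V A (\<lambda>u. int (count_list vs u)) w = 0] (mod int k)"
      by (simp add: l_def cong_def mod_add_left_eq)
    then show ?thesis
      by (simp add: cong_iff_dvd_diff cong_0_iff)
  qed
  then show "\<exists>c. \<forall>w\<in>V. [toggle_effect V A c w = b w] (mod int k)" by blast
qed

lemma k_AW_if_toggle_surjective: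
  assumes V: "finite V" and k: "k \<ge> 1" and surj: "toggle_surjective k V A"
  shows "k_AW k V A"
  unfolding k_AW_def
proof (intro allI impI)
  fix l :: "'a \<Rightarrow> int"
  assume l: "\<forall>w\<in>V. l w \<in> {0..<int k}"
  obtain c where c: "\<forall>w\<in>V. [toggle_effect V A c w = - l w] (mod int k)"
    using spec[OF surj[unfolded toggle_surjective_def], of "\<lambda>w. - l w"] by blast
  obtain vs where vs: "set vs \<subseteq> V" and cnt: "\<forall>u\<in>V. count_list vs u = nat (c u mod int k)"
    using exists_list_with_counts[OF V, of "\<lambda>u. nat (c u mod int k)"] by blast
  have "play A (int k) vs l w = 0" if w: "w \<in> V" for w
  proof -
    have "[int (count_list vs u) = c u] (mod int k)" if "u \<in> V" for u
      using cnt that k by (simp add: cong_def)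
    then have "[toggle_effect V A (\<lambda>u. int (count_list vs u)) w = toggle_effect V A c w] (mod int k)"
      by (rule toggle_effect_cong)
    then have "[toggle_effect V A (\<lambda>u. int (count_list vs u)) w = - l w] (mod int k)"
      using c w by (blast intro: cong_trans)
    then have "[l w + toggle_effect V A (\<lambda>u. int (count_list vs u)) w = l w + - l w] (mod int k)"
      by (rule cong_add_lcancel[THEN iffD2])
    then show ?thesis
      using play_eq_0_iff[OF V vs] l w by simp
  qed
  with vs show "\<exists>vs. set vs \<subseteq> V \<and> (\<forall>v\<in>V. play A (int k) vs l v = 0)" by blast
qed

lemma k_AW_iff_toggle_surjective:
  "finite V \<Longrightarrow> k \<ge> 1 \<Longrightarrow> k_AW k V A \<longleftrightarrow> toggle_surjective k V A"
  using toggle_surjective_if_k_AW k_AW_if_toggle_surjective by blast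

lemma toggle_effect_reindex:
  assumes f: "bij_betw f I V" and j: "j \<in> I"
  shows "toggle_effect V A c (f j) = toggle_effect I {(i, i'). (f i, f i') \<in> A} (\<lambda>i. c (f i)) j"
proof -
  have "f i = f j \<longleftrightarrow> i = j" if "i \<in> I" for i
    using f j that by (auto simp: bij_betw_def inj_on_def)
  then show ?thesis
    unfolding toggle_effect_def sum.reindex_bij_betw[OF f, symmetric]
    by (intro sum.cong) auto
qed

lemma toggle_surjective_reindex:
  assumes f: "bij_betw f I V"
  shows "toggle_surjective k V A \<longleftrightarrow> toggle_surjective k I {(i, i'). (f i, f i') \<in> A}"
proof
  assume surj: "toggle_surjective k V A"
  show "toggle_surjective k I {(i, i'). (f i, f i') \<in> A}"
    unfolding toggle_surjective_def
  proof
    fix b :: "_ \<Rightarrow> int"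
    obtain c where c: "\<forall>w\<in>V. [toggle_effect V A c w = b (inv_into I f w)] (mod int k)"
      using spec[OF surj[unfolded toggle_surjective_def], of "\<lambda>w. b (inv_into I f w)"] by blast
    have "[toggle_effect I {(i, i'). (f i, f i') \<in> A} (\<lambda>i. c (f i)) j = b j] (mod int k)"
      if "j \<in> I" for j
      using c[rule_format, of "f j"] f that
      by (simp add: toggle_effect_reindex bij_betw_apply bij_betw_inv_into_left)
    then show "\<exists>c. \<forall>j\<in>I. [toggle_effect I {(i, i'). (f i, f i') \<in> A} c j = b j] (mod int k)"
      by blast
  qed
next
  assume surj: "toggle_surjective k I {(i, i'). (f i, f i') \<in> A}"
  show "toggle_surjective k V A"
    unfolding toggle_surjective_def
  proof
    fix b :: "_ \<Rightarrow> int"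
    obtain c where c: "\<forall>j\<in>I. [toggle_effect I {(i, i'). (f i, f i') \<in> A} c j = b (f j)] (mod int k)"
      using spec[OF surj[unfolded toggle_surjective_def], of "\<lambda>j. b (f j)"] by blast
    have "[toggle_effect V A (\<lambda>w. c (inv_into I f w)) w = b w] (mod int k)" if w: "w \<in> V" for w
    proof -
      obtain j where j: "j \<in> I" "w = f j"
        using f w unfolding bij_betw_def by blast
      have "toggle_effect V A (\<lambda>w. c (inv_into I f w)) (f j)
          = toggle_effect I {(i, i'). (f i, f i') \<in> A} c j"
        unfolding toggle_effect_reindex[OF f j(1)]
        using f by (intro toggle_effect_cong_eq) (simp add: bij_betw_inv_into_left)
      then show ?thesis using c j by simp
    qed
    then show "\<exists>c. \<forall>w\<in>V. [toggle_effect V A c w = b w] (mod int k)" by blast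
  qed
qed

lemma toggle_surjective_if_kernel_trivial:
  assumes V: "finite V" and k: "k \<ge> 1"
    and kernel: "\<And>c. \<forall>w\<in>V. [toggle_effect V A c w = 0] (mod int k) \<Longrightarrow> \<forall>u\<in>V. [c u = 0] (mod int k)"
  shows "toggle_surjective k V A"
proof -
  define D where "D = (\<Pi>\<^sub>E u\<in>V. {0..<int k})"
  define g where "g c = restrict (\<lambda>w. toggle_effect V A c w mod int k) V" for c
  have "g ` D \<subseteq> D"
    using k by (auto simp: D_def g_def)
  moreover have "inj_on g D"
  proof (rule inj_onI)
    fix c d
    assume c: "c \<in> D" and d: "d \<in> D" and eq: "g c = g d"
    have "[toggle_effect V A (\<lambda>u. c u - d u) w = 0] (mod int k)" if "w \<in> V" for w
      using fun_cong[OF eq, of w] that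
      by (simp add: g_def toggle_effect_diff cong_0_iff mod_eq_dvd_iff)
    then have "[c u = d u] (mod int k)" if "u \<in> V" for u
      using kernel[of "\<lambda>u. c u - d u"] that by (simp add: cong_0_iff cong_iff_dvd_diff)
    then show "c = d"
      using c d unfolding D_def
      by (intro PiE_ext[OF c[unfolded D_def] d[unfolded D_def]] cong_less_imp_eq_int) auto
  qed
  ultimately have surj: "g ` D = D"
    using V by (intro endo_inj_surj) (simp_all add: D_def finite_PiE)
  show ?thesis
    unfolding toggle_surjective_def
  proof
    fix b :: "_ \<Rightarrow> int"
    have "restrict (\<lambda>w. b w mod int k) V \<in> g ` D"
      using k surj by (simp add: D_def)
    then obtain c where gc: "g c = restrict (\<lambda>w. b w mod int k) V" by (elim imageE) simp
    have "[toggle_effect V A c w = b w] (mod int k)" if "w \<in> V" for w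
      using fun_cong[OF gc, of w] that by (simp add: g_def cong_def)
    then show "\<exists>c. \<forall>w\<in>V. [toggle_effect V A c w = b w] (mod int k)" by blast
  qed
qed

section \<open>Tournaments whose feedback arcs form a path\<close>

lemma path_system_signed_fib:
  fixes x :: "nat \<Rightarrow> int" and k \<beta> :: int
  assumes eq: "\<And>t. t \<le> m \<Longrightarrow> [x t + (if t < m then x (Suc t) else 0) - (if 0 < t then x (t - 1) else 0)
                          = (if t = m then \<beta> else 0)] (mod k)"
  shows path_system_signed_fib_values:
      "t \<le> m \<Longrightarrow> [x t = (-1) ^ t * int (fib (Suc t)) * x 0] (mod k)"
    and path_system_signed_fib_end: "[(-1) ^ m * int (fib (m + 2)) * x 0 = \<beta>] (mod k)"
proof -
  define f where "f t = (-1) ^ t * int (fib (Suc t)) * x 0" for t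
  have f_rec: "f (Suc (Suc t)) = f t - f (Suc t)" for t
    by (simp add: f_def algebra_simps)
  have f_values: "[x t = f t] (mod k)" if "t \<le> m" for t
    using that
  proof (induction t rule: fib.induct)
    case 1
    show ?case by (simp add: f_def)
  next
    case 2
    then have "[x 0 + x 1 = 0] (mod k)" using eq[of 0] by simp
    then show ?case by (simp add: f_def cong_0_iff cong_iff_dvd_diff add.commute)
  next
    case (3 t)
    have "[(x (Suc t) + x (Suc (Suc t)) - x t) - x (Suc t) + x t = 0 - f (Suc t) + f t] (mod k)"
      using eq[of "Suc t"] 3 by (intro cong_add cong_diff) simp_all
    then show ?case by (simp add: f_rec)
  qed
  then show "t \<le> m \<Longrightarrow> [x t = (-1) ^ t * int (fib (Suc t)) * x 0] (mod k)"
    by (simp add: f_def)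
  show "[(-1) ^ m * int (fib (m + 2)) * x 0 = \<beta>] (mod k)"
  proof (cases m)
    case 0
    then show ?thesis using eq[of 0] by (simp add: numeral_2_eq_2)
  next
    case (Suc s)
    have "[f m - f s = x m - x s] (mod k)"
      using f_values[of m] f_values[of s] Suc by (intro cong_diff) (simp_all add: cong_sym)
    also have "[x m - x s = \<beta>] (mod k)"
      using eq[of m] Suc by simp
    finally have "[f m - f s = \<beta>] (mod k)" .
    moreover have "f m - f s = (-1) ^ m * int (fib (m + 2)) * x 0"
      using Suc by (simp add: f_def algebra_simps)
    ultimately show ?thesis by simp
  qed
qed

lemma sum_lessThan_if_le:
  fixes c :: "nat \<Rightarrow> 'a::comm_monoid_add"
  assumes "j < n"
  shows "(\<Sum>i<n. if i \<le> j then c i else 0) = sum c {..j}"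
proof -
  have "(\<Sum>i<n. if i \<le> j then c i else 0) = sum c {i \<in> {..<n}. i \<le> j}"
    by (rule sum.inter_filter[symmetric]) simp
  also have "{i \<in> {..<n}. i \<le> j} = {..j}"
    using assms by auto
  finally show ?thesis .
qed

text \<open>The index digraph of a tournament ordered by a minimum feedback arc set that is the path
  \<open>p m \<rightarrow> \<dots> \<rightarrow> p 0\<close>.\<close>

locale reversed_path_order =
  fixes n m :: nat and p :: "nat \<Rightarrow> nat" and B :: "(nat \<times> nat) set"
  assumes path_gap: "\<And>t. t < m \<Longrightarrow> Suc (p t) < p (Suc t)"
    and path_end_less: "p m < n"
    and arc_iff: "\<And>i j. i < n \<Longrightarrow> j < n \<Longrightarrow> (i, j) \<in> B \<longleftrightarrow>
        (i < j \<and> \<not> (\<exists>t<m. i = p t \<and> j = p (Suc t))) \<or> (\<exists>t<m. i = p (Suc t) \<and> j = p t)"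
begin

lemma p_strict_mono: "s < t \<Longrightarrow> t \<le> m \<Longrightarrow> p s < p t"
proof (induction t)
  case (Suc t)
  then show ?case
    using path_gap[of t] by (cases "s = t") auto
qed simp

lemma p_le_mono: "s \<le> t \<Longrightarrow> t \<le> m \<Longrightarrow> p s \<le> p t"
  using p_strict_mono[of s t] by (cases "s = t") auto

lemma p_eq_iff: "s \<le> m \<Longrightarrow> t \<le> m \<Longrightarrow> p s = p t \<longleftrightarrow> s = t"
  by (metis less_irrefl linorder_neqE_nat p_strict_mono)

lemma p_less: "t \<le> m \<Longrightarrow> p t < n"
  using p_le_mono[of t m] path_end_less by simp

lemma arc_to_off_path_iff:
  assumes "i < n" "j < n" "\<forall>t\<le>m. j \<noteq> p t"
  shows "(i, j) \<in> B \<longleftrightarrow> i < j"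
proof -
  have "\<not> (\<exists>t<m. j = p t)" "\<not> (\<exists>t<m. j = p (Suc t))"
    using assms(3) by (auto simp: Suc_leI)
  then show ?thesis
    using arc_iff[OF assms(1,2)] by blast
qed

lemma arc_to_path_iff:
  assumes t: "t \<le> m" and i: "i < n"
  shows "(i, p t) \<in> B \<longleftrightarrow> (i < p t \<and> \<not> (0 < t \<and> i = p (t - 1))) \<or> (t < m \<and> i = p (Suc t))"
proof -
  have "(\<exists>s<m. i = p s \<and> p t = p (Suc s)) \<longleftrightarrow> 0 < t \<and> i = p (t - 1)"
  proof
    assume "\<exists>s<m. i = p s \<and> p t = p (Suc s)"
    then obtain s where "s < m" "i = p s" "p t = p (Suc s)" by blast
    moreover from this have "t = Suc s"
      using p_eq_iff[OF t, of "Suc s"] by simp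
    ultimately show "0 < t \<and> i = p (t - 1)" by simp
  next
    assume "0 < t \<and> i = p (t - 1)"
    then show "\<exists>s<m. i = p s \<and> p t = p (Suc s)"
      using t by (intro exI[of _ "t - 1"]) auto
  qed
  moreover have "(\<exists>s<m. i = p (Suc s) \<and> p t = p s) \<longleftrightarrow> t < m \<and> i = p (Suc t)"
  proof
    assume "\<exists>s<m. i = p (Suc s) \<and> p t = p s"
    then obtain s where "s < m" "i = p (Suc s)" "p t = p s" by blast
    moreover from this have "t = s"
      using p_eq_iff[OF t, of s] by simp
    ultimately show "t < m \<and> i = p (Suc t)" by simp
  qed blast
  ultimately show ?thesis
    using arc_iff[OF i p_less[OF t]] by simp
qed

lemma toggle_effect_off_path:
  assumes "j < n" "\<forall>t\<le>m. j \<noteq> p t"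
  shows "toggle_effect {..<n} B c j = sum c {..j}"
proof -
  have "toggle_effect {..<n} B c j = (\<Sum>i<n. if i \<le> j then c i else 0)"
    unfolding toggle_effect_def using arc_to_off_path_iff[OF _ assms] by (intro sum.cong) auto
  then show ?thesis
    using sum_lessThan_if_le[OF assms(1)] by simp
qed

lemma toggle_effect_on_path:
  assumes t: "t \<le> m"
  shows "toggle_effect {..<n} B c (p t)
       = sum c {..p t} + (if t < m then c (p (Suc t)) else 0) - (if 0 < t then c (p (t - 1)) else 0)"
proof -
  have pred: "0 < t \<Longrightarrow> p (t - 1) < p t" and succ: "t < m \<Longrightarrow> p t < p (Suc t)"
    using t p_strict_mono by auto
  have indicator_split: "(if (X \<and> \<not> Y) \<or> Z then v else 0)
      = (if X then v else 0) - (if Y then v else 0) + (if Z then v else 0)"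
    if "Y \<Longrightarrow> X" "Z \<Longrightarrow> \<not> X" for X Y Z and v :: int
    using that by auto
  have "toggle_effect {..<n} B c (p t)
      = (\<Sum>i<n. (if i \<le> p t then c i else 0) - (if 0 < t \<and> i = p (t - 1) then c i else 0)
                + (if t < m \<and> i = p (Suc t) then c i else 0))"
    unfolding toggle_effect_def
  proof (intro sum.cong refl)
    fix i
    assume "i \<in> {..<n}"
    then have arc: "i = p t \<or> (i, p t) \<in> B \<longleftrightarrow>
        (i \<le> p t \<and> \<not> (0 < t \<and> i = p (t - 1))) \<or> (t < m \<and> i = p (Suc t))"
      using arc_to_path_iff[OF t] pred by auto
    show "(if i = p t \<or> (i, p t) \<in> B then c i else 0)
        = (if i \<le> p t then c i else 0) - (if 0 < t \<and> i = p (t - 1) then c i else 0)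
          + (if t < m \<and> i = p (Suc t) then c i else 0)"
      unfolding arc by (rule indicator_split) (use pred succ in auto)
  qed
  also have "\<dots> = sum c {..p t} + (if t < m then c (p (Suc t)) else 0) - (if 0 < t then c (p (t - 1)) else 0)"
    using t p_less[of t] p_less[of "Suc t"] p_less[of "t - 1"]
    by (cases "0 < t"; cases "t < m") (simp_all add: sum.distrib sum_subtractf sum_lessThan_if_le)
  finally show ?thesis .
qed

lemma pred_not_on_path:
  assumes t: "t \<le> m" and pos: "0 < p t" and s: "s \<le> m"
  shows "p t - 1 \<noteq> p s"
proof
  assume eq: "p t - 1 = p s"
  have "s < t"
  proof (rule ccontr)
    assume "\<not> s < t"
    then have "p t \<le> p s"
      using p_le_mono s by simp
    then show False
      using eq pos by simp
  qed
  then have "p s \<le> p (t - 1)" and "Suc (p (t - 1)) < p t"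
    using p_le_mono[of s "t - 1"] path_gap[of "t - 1"] t by auto
  then show False
    using eq pos by simp
qed

context
  fixes c :: "nat \<Rightarrow> int" and k \<beta> :: int
  assumes sys: "\<forall>j<n. [toggle_effect {..<n} B c j = (if j = p m then \<beta> else 0)] (mod k)"
begin

lemma prefix_sum_off_path:
  assumes "j < n" "\<forall>t\<le>m. j \<noteq> p t"
  shows "[sum c {..j} = 0] (mod k)"
  using sys assms toggle_effect_off_path[OF assms] by auto

lemma path_vertex_prefix_sum:
  assumes t: "t \<le> m"
  shows "[c (p t) = sum c {..p t}] (mod k)"
proof (cases "p t")
  case (Suc q)
  have "[sum c {..q} = 0] (mod k)"
    using prefix_sum_off_path[of q] pred_not_on_path[OF t] p_less[OF t] Suc by simp
  then have "[c (p t) + sum c {..q} = c (p t)] (mod k)"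
    using cong_add_lcancel_0 by blast
  then show ?thesis
    using Suc by (simp add: cong_sym add.commute)
qed simp

lemma path_prefix_sums_system:
  assumes t: "t \<le> m"
  shows "[sum c {..p t} + (if t < m then sum c {..p (Suc t)} else 0)
            - (if 0 < t then sum c {..p (t - 1)} else 0) = (if t = m then \<beta> else 0)] (mod k)"
proof -
  have "[sum c {..p t} + (if t < m then sum c {..p (Suc t)} else 0)
           - (if 0 < t then sum c {..p (t - 1)} else 0) = toggle_effect {..<n} B c (p t)] (mod k)"
    unfolding toggle_effect_on_path[OF t]
    using path_vertex_prefix_sum[of "Suc t"] path_vertex_prefix_sum[of "t - 1"] t
    by (intro cong_add cong_diff) (auto simp: cong_sym)
  also have "[toggle_effect {..<n} B c (p t) = (if p t = p m then \<beta> else 0)] (mod k)"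
    using sys p_less[OF t] by blast
  also have "(if p t = p m then \<beta> else 0) = (if t = m then \<beta> else 0)"
    using p_eq_iff[OF t, of m] by simp
  finally show ?thesis .
qed

lemma prefix_sum_path_signed_fib:
  "t \<le> m \<Longrightarrow> [sum c {..p t} = (-1) ^ t * int (fib (Suc t)) * sum c {..p 0}] (mod k)"
  using path_system_signed_fib_values[OF path_prefix_sums_system] by simp

lemma prefix_sum_path_end:
  "[(-1) ^ m * int (fib (m + 2)) * sum c {..p 0} = \<beta>] (mod k)"
  using path_system_signed_fib_end[OF path_prefix_sums_system] by simp

end

lemma kernel_trivial:
  fixes c :: "nat \<Rightarrow> int" and k :: int
  assumes cop: "coprime k (int (fib (m + 2)))"
    and ker: "\<forall>j<n. [toggle_effect {..<n} B c j = 0] (mod k)"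
  shows "\<forall>i<n. [c i = 0] (mod k)"
proof -
  have sys: "\<forall>j<n. [toggle_effect {..<n} B c j = (if j = p m then 0 else 0)] (mod k)"
    using ker by simp
  have "k dvd int (fib (m + 2)) * ((-1) ^ m * sum c {..p 0})"
    using prefix_sum_path_end[OF sys] by (simp add: cong_0_iff algebra_simps)
  then have start: "k dvd sum c {..p 0}"
    using cop by (simp add: coprime_dvd_mult_right_iff)
  have prefix: "[sum c {..j} = 0] (mod k)" if j: "j < n" for j
  proof (cases "\<exists>t\<le>m. j = p t")
    case True
    then obtain t where t: "t \<le> m" "j = p t" by blast
    have "[(-1) ^ t * int (fib (Suc t)) * sum c {..p 0} = 0] (mod k)"
      using start by (simp add: cong_0_iff)
    then show ?thesis
      using prefix_sum_path_signed_fib[OF sys t(1)] t(2) by (blast intro: cong_trans)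
  next
    case False
    then show ?thesis
      using prefix_sum_off_path[OF sys j] by auto
  qed
  show ?thesis
  proof (intro allI impI)
    fix i
    assume i: "i < n"
    show "[c i = 0] (mod k)"
    proof (cases i)
      case (Suc q)
      have "[sum c {..Suc q} - sum c {..q} = 0 - 0] (mod k)"
        using prefix[of "Suc q"] prefix[of q] i Suc by (intro cong_diff) auto
      then show ?thesis
        using Suc by simp
    qed (use prefix[OF i] in simp)
  qed
qed

theorem toggle_surjective_iff_coprime:
  assumes k: "k \<ge> 1"
  shows "toggle_surjective k {..<n} B \<longleftrightarrow> coprime k (fib (m + 2))"
proof
  assume surj: "toggle_surjective k {..<n} B"
  obtain c where "\<forall>j<n. [toggle_effect {..<n} B c j = (if j = p m then 1 else 0)] (mod int k)"
    using spec[OF surj[unfolded toggle_surjective_def], of "\<lambda>j. if j = p m then 1 else 0"] by auto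
  then have "[1 = (-1) ^ m * int (fib (m + 2)) * sum c {..p 0}] (mod int k)"
    by (rule prefix_sum_path_end[THEN cong_sym])
  then have "coprime ((-1) ^ m * int (fib (m + 2)) * sum c {..p 0}) (int k)"
    by (rule cong_imp_coprime) simp
  then have "coprime (int (fib (m + 2))) (int k)"
    by (metis coprime_mult_left_iff)
  then show "coprime k (fib (m + 2))"
    by (metis coprime_commute coprime_int_iff)
next
  assume "coprime k (fib (m + 2))"
  then have "coprime (int k) (int (fib (m + 2)))"
    by (simp only: coprime_int_iff)
  then show "toggle_surjective k {..<n} B"
    using kernel_trivial[of "int k"] k by (intro toggle_surjective_if_kernel_trivial) auto
qed

end

section \<open>Minimum feedback arc sets\<close>

lemma fas_wrt_nth_iff:
  assumes "distinct \<sigma>" "i < length \<sigma>" "j < length \<sigma>"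
  shows "(\<sigma> ! j, \<sigma> ! i) \<in> fas_wrt A \<sigma> \<longleftrightarrow> i < j \<and> (\<sigma> ! j, \<sigma> ! i) \<in> A"
proof
  assume "(\<sigma> ! j, \<sigma> ! i) \<in> fas_wrt A \<sigma>"
  then obtain i' j' where "i' < j'" "j' < length \<sigma>" "\<sigma> ! j' = \<sigma> ! j" "\<sigma> ! i' = \<sigma> ! i"
      and "(\<sigma> ! j, \<sigma> ! i) \<in> A"
    unfolding fas_wrt_def by auto
  moreover from this have "j' = j" "i' = i"
    using assms by (simp_all add: nth_eq_iff_index_eq)
  ultimately show "i < j \<and> (\<sigma> ! j, \<sigma> ! i) \<in> A" by simp
next
  assume "i < j \<and> (\<sigma> ! j, \<sigma> ! i) \<in> A"
  then show "(\<sigma> ! j, \<sigma> ! i) \<in> fas_wrt A \<sigma>"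
    using assms unfolding fas_wrt_def by blast
qed

lemma tournament_arc_iff_fas_wrt:
  assumes tour: "tournament V A" and \<sigma>: "is_ordering V \<sigma>"
    and i: "i < length \<sigma>" and j: "j < length \<sigma>"
  shows "(\<sigma> ! i, \<sigma> ! j) \<in> A \<longleftrightarrow>
           (i < j \<and> (\<sigma> ! j, \<sigma> ! i) \<notin> fas_wrt A \<sigma>) \<or> (\<sigma> ! i, \<sigma> ! j) \<in> fas_wrt A \<sigma>"
proof (cases "i = j")
  case True
  then show ?thesis
    using tour unfolding tournament_def fas_wrt_def by auto
next
  case False
  have "\<sigma> ! i \<in> V" "\<sigma> ! j \<in> V" "\<sigma> ! i \<noteq> \<sigma> ! j"
    using \<sigma> i j False by (auto simp: is_ordering_def nth_eq_iff_index_eq)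
  then have "(\<sigma> ! i, \<sigma> ! j) \<in> A \<longleftrightarrow> (\<sigma> ! j, \<sigma> ! i) \<notin> A"
    using tour unfolding tournament_def by blast
  then show ?thesis
    using fas_wrt_nth_iff[of \<sigma> i j A] fas_wrt_nth_iff[of \<sigma> j i A] \<sigma> i j False
    by (auto simp: is_ordering_def)
qed

lemma fas_wrt_swap_adjacent:
  assumes dist: "distinct \<sigma>" and i: "Suc i < length \<sigma>" and forward: "(\<sigma> ! i, \<sigma> ! Suc i) \<notin> A"
  shows "fas_wrt A (\<sigma>[i := \<sigma> ! Suc i, Suc i := \<sigma> ! i]) \<subseteq> fas_wrt A \<sigma> - {(\<sigma> ! Suc i, \<sigma> ! i)}"
proof
  let ?\<sigma>' = "\<sigma>[i := \<sigma> ! Suc i, Suc i := \<sigma> ! i]"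
  let ?s = "\<lambda>t. if t = i then Suc i else if t = Suc i then i else t"
  have swap_nth: "?\<sigma>' ! t = \<sigma> ! ?s t" if "t < length \<sigma>" for t
    using i that by (simp add: nth_list_update)
  fix z
  assume "z \<in> fas_wrt A ?\<sigma>'"
  then obtain a b where z: "z \<in> A" "a < b" "b < length \<sigma>" "z = (?\<sigma>' ! b, ?\<sigma>' ! a)"
    unfolding fas_wrt_def by auto
  then have z_eq: "z = (\<sigma> ! ?s b, \<sigma> ! ?s a)"
    using swap_nth by simp
  have "\<not> (a = i \<and> b = Suc i)"
    using z z_eq forward by auto
  then have s_less: "?s a < ?s b"
    using z(2) by auto
  have s_b: "?s b < length \<sigma>"
    using z(3) i by auto
  have "z \<in> fas_wrt A \<sigma>"
    using z(1) z_eq s_less s_b unfolding fas_wrt_def by blast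
  moreover have "z \<noteq> (\<sigma> ! Suc i, \<sigma> ! i)"
  proof
    assume "z = (\<sigma> ! Suc i, \<sigma> ! i)"
    then have "?s b = Suc i" "?s a = i"
      using z_eq dist i s_less s_b by (simp_all add: nth_eq_iff_index_eq)
    then show False
      using z(2) by (auto split: if_splits)
  qed
  ultimately show "z \<in> fas_wrt A \<sigma> - {(\<sigma> ! Suc i, \<sigma> ! i)}" by simp
qed

lemma fas_wrt_subset: "fas_wrt A \<sigma> \<subseteq> A"
  by (auto simp: fas_wrt_def)

lemma min_fas_adjacent_not_backward:
  assumes tour: "tournament V A" and \<sigma>: "is_ordering V \<sigma>"
    and min: "min_feedback_arc_set V A (fas_wrt A \<sigma>)" and i: "Suc i < length \<sigma>"
  shows "(\<sigma> ! Suc i, \<sigma> ! i) \<notin> A"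
proof
  assume backward: "(\<sigma> ! Suc i, \<sigma> ! i) \<in> A"
  have dist: "distinct \<sigma>" and set\<sigma>: "set \<sigma> = V"
    using \<sigma> by (simp_all add: is_ordering_def)
  have "(\<sigma> ! i, \<sigma> ! Suc i) \<notin> A"
    using tour backward i dist set\<sigma> unfolding tournament_def
    by (metis Suc_lessD n_not_Suc_n nth_eq_iff_index_eq nth_mem)
  then have "fas_wrt A (\<sigma>[i := \<sigma> ! Suc i, Suc i := \<sigma> ! i]) \<subseteq> fas_wrt A \<sigma> - {(\<sigma> ! Suc i, \<sigma> ! i)}"
    by (rule fas_wrt_swap_adjacent[OF dist i])
  moreover have "finite (fas_wrt A \<sigma>)"
    using tour fas_wrt_subset unfolding tournament_def by (meson finite_SigmaI finite_subset)
  moreover have "(\<sigma> ! Suc i, \<sigma> ! i) \<in> fas_wrt A \<sigma>"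
    using fas_wrt_nth_iff[of \<sigma> i "Suc i" A] dist i backward by simp
  ultimately have "card (fas_wrt A (\<sigma>[i := \<sigma> ! Suc i, Suc i := \<sigma> ! i])) < card (fas_wrt A \<sigma>)"
    by (meson card_Diff1_less card_mono finite_Diff le_less_trans)
  moreover have "is_ordering V (\<sigma>[i := \<sigma> ! Suc i, Suc i := \<sigma> ! i])"
    using dist set\<sigma> i by (simp add: is_ordering_def set_swap)
  then have "feedback_arc_set V A (fas_wrt A (\<sigma>[i := \<sigma> ! Suc i, Suc i := \<sigma> ! i]))"
    unfolding feedback_arc_set_def by blast
  ultimately show False
    using min unfolding min_feedback_arc_set_def by (meson leD)
qed

lemma min_fas_feedback_arc_long:
  assumes tour: "tournament V A" and \<sigma>: "is_ordering V \<sigma>"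
    and min: "min_feedback_arc_set V A (fas_wrt A \<sigma>)"
    and i: "i < length \<sigma>" and j: "j < length \<sigma>" and feedback: "(\<sigma> ! j, \<sigma> ! i) \<in> fas_wrt A \<sigma>"
  shows "Suc i < j"
proof -
  have "i < j" and backward: "(\<sigma> ! j, \<sigma> ! i) \<in> A"
    using fas_wrt_nth_iff[of \<sigma> i j A] \<sigma> i j feedback by (auto simp: is_ordering_def)
  moreover have "j \<noteq> Suc i"
    using min_fas_adjacent_not_backward[OF tour \<sigma> min, of i] backward j by auto
  ultimately show ?thesis by simp
qed

lemma card_path_arcs:
  assumes "distinct us"
  shows "card {(us ! a, us ! Suc a) | a. Suc a < length us} = length us - 1"
proof -
  have "{(us ! a, us ! Suc a) | a. Suc a < length us} = (\<lambda>a. (us ! a, us ! Suc a)) ` {..<length us - 1}"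
    by auto
  moreover have "inj_on (\<lambda>a. (us ! a, us ! Suc a)) {..<length us - 1}"
    using assms by (auto intro!: inj_onI simp: nth_eq_iff_index_eq)
  ultimately show ?thesis
    by (simp add: card_image)
qed

lemma path_positions_in_ordering:
  assumes dist: "distinct \<sigma>" and us: "us \<noteq> []" "set us \<subseteq> set \<sigma>"
  defines "m \<equiv> length us - 1"
  obtains p where "\<And>t. t \<le> m \<Longrightarrow> p t < length \<sigma> \<and> \<sigma> ! p t = us ! (m - t)"
    and "\<And>i j. i < length \<sigma> \<Longrightarrow> j < length \<sigma> \<Longrightarrow>
           (\<sigma> ! i, \<sigma> ! j) \<in> {(us ! a, us ! Suc a) | a. Suc a < length us} \<longleftrightarrow>
           (\<exists>t<m. i = p (Suc t) \<and> j = p t)"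
proof -
  have len_us: "length us = Suc m"
    using us(1) by (simp add: m_def)
  have "\<forall>a\<in>{..m}. \<exists>i. i < length \<sigma> \<and> \<sigma> ! i = us ! a"
    using us(2) len_us by (auto simp: in_set_conv_nth[symmetric])
  then obtain pos where pos: "\<forall>a\<in>{..m}. pos a < length \<sigma> \<and> \<sigma> ! pos a = us ! a"
    by (metis bchoice)
  define p where "p t = pos (m - t)" for t
  have p: "p t < length \<sigma>" "\<sigma> ! p t = us ! (m - t)" if "t \<le> m" for t
    using pos that by (simp_all add: p_def)
  have "(\<sigma> ! i, \<sigma> ! j) \<in> {(us ! a, us ! Suc a) | a. Suc a < length us} \<longleftrightarrow>
      (\<exists>t<m. i = p (Suc t) \<and> j = p t)"
    if ij: "i < length \<sigma>" "j < length \<sigma>" for i j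
  proof
    assume "(\<sigma> ! i, \<sigma> ! j) \<in> {(us ! a, us ! Suc a) | a. Suc a < length us}"
    then obtain a where a: "a < m" "\<sigma> ! i = us ! a" "\<sigma> ! j = us ! Suc a"
      using len_us by auto
    define t where "t = m - Suc a"
    have t: "t < m" "Suc t \<le> m"
      using a(1) by (simp_all add: t_def)
    have "\<sigma> ! p (Suc t) = \<sigma> ! i" "\<sigma> ! p t = \<sigma> ! j"
      using p a t by (simp_all add: t_def Suc_diff_Suc)
    then have "i = p (Suc t)" "j = p t"
      using nth_eq_iff_index_eq[OF dist, of "p (Suc t)" i] nth_eq_iff_index_eq[OF dist, of "p t" j] p t ij
      by auto
    then show "\<exists>t<m. i = p (Suc t) \<and> j = p t"
      using t by blast
  next
    assume "\<exists>t<m. i = p (Suc t) \<and> j = p t"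
    then obtain t where t: "t < m" "i = p (Suc t)" "j = p t" by blast
    then have "\<sigma> ! i = us ! (m - Suc t)" "\<sigma> ! j = us ! Suc (m - Suc t)" "Suc (m - Suc t) < length us"
      using p len_us by (simp_all add: Suc_diff_Suc)
    then show "(\<sigma> ! i, \<sigma> ! j) \<in> {(us ! a, us ! Suc a) | a. Suc a < length us}"
      by blast
  qed
  with p that show ?thesis by blast
qed

lemma reversed_path_order_of_min_fas:
  assumes tour: "tournament V A" and \<sigma>: "is_ordering V \<sigma>"
    and min: "min_feedback_arc_set V A (fas_wrt A \<sigma>)"
    and us: "us \<noteq> []" "set us \<subseteq> V"
    and path: "fas_wrt A \<sigma> = {(us ! a, us ! Suc a) | a. Suc a < length us}"
  shows "\<exists>p. reversed_path_order (length \<sigma>) (length us - 1) p {(i, j). (\<sigma> ! i, \<sigma> ! j) \<in> A}"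
proof -
  define m where "m = length us - 1"
  obtain p where p: "\<And>t. t \<le> m \<Longrightarrow> p t < length \<sigma> \<and> \<sigma> ! p t = us ! (m - t)"
    and feedback_iff: "\<And>i j. i < length \<sigma> \<Longrightarrow> j < length \<sigma> \<Longrightarrow>
          (\<sigma> ! i, \<sigma> ! j) \<in> fas_wrt A \<sigma> \<longleftrightarrow> (\<exists>t<m. i = p (Suc t) \<and> j = p t)"
    using path_positions_in_ordering[of \<sigma> us] \<sigma> us unfolding path m_def is_ordering_def by blast
  have gap: "Suc (p t) < p (Suc t)" if t: "t < m" for t
  proof -
    have "(\<sigma> ! p (Suc t), \<sigma> ! p t) \<in> fas_wrt A \<sigma>"
      using feedback_iff[of "p (Suc t)" "p t"] p[of t] p[of "Suc t"] t by auto
    then show ?thesis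
      using min_fas_feedback_arc_long[OF tour \<sigma> min] p[of t] p[of "Suc t"] t by simp
  qed
  have arc: "(\<sigma> ! i, \<sigma> ! j) \<in> A \<longleftrightarrow>
      (i < j \<and> \<not> (\<exists>t<m. i = p t \<and> j = p (Suc t))) \<or> (\<exists>t<m. i = p (Suc t) \<and> j = p t)"
    if "i < length \<sigma>" "j < length \<sigma>" for i j
    using tournament_arc_iff_fas_wrt[OF tour \<sigma>, of i j] feedback_iff[of i j] feedback_iff[of j i] that
    by auto
  have "reversed_path_order (length \<sigma>) m p {(i, j). (\<sigma> ! i, \<sigma> ! j) \<in> A}"
    by unfold_locales (use gap p arc in auto)
  then show ?thesis
    unfolding m_def by blast
qed

lemma directed_path_as_nonempty_list:
  assumes "is_directed_path (arc_verts S) S" "S \<subseteq> V \<times> V" "V \<noteq> {}"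
  shows "\<exists>us. distinct us \<and> us \<noteq> [] \<and> set us \<subseteq> V \<and> S = {(us ! a, us ! Suc a) | a. Suc a < length us}"
proof -
  obtain us where us: "distinct us" "set us = arc_verts S"
    and S: "S = {(us ! a, us ! Suc a) | a. Suc a < length us}"
    using assms(1) unfolding is_directed_path_def by blast
  show ?thesis
  proof (cases "us = []")
    case True
    obtain v where "v \<in> V"
      using assms(3) by blast
    with True S show ?thesis
      by (intro exI[of _ "[v]"]) simp
  next
    case False
    have "arc_verts S \<subseteq> V"
      using assms(2) unfolding arc_verts_def by auto
    with us S False show ?thesis by blast
  qed
qed

theorem mainTheorem7:
  fixes V :: "'a set" and A S :: "('a \<times> 'a) set" and k :: nat
  assumes "tournament V A"
    and "strongly_connected V A"
    and "min_feedback_arc_set V A S"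
    and "is_directed_path (arc_verts S) S"
    and "k \<ge> 2"
  shows "k_AW k V A \<longleftrightarrow> gcd k (fib (card S + 2)) = 1"
proof -
  obtain \<sigma> where \<sigma>: "is_ordering V \<sigma>" and S: "S = fas_wrt A \<sigma>"
    using assms(3) unfolding min_feedback_arc_set_def feedback_arc_set_def by blast
  have V: "finite V" and S_sub: "S \<subseteq> V \<times> V"
    using assms(1) S fas_wrt_subset[of A \<sigma>] by (auto simp: tournament_def)
  show ?thesis
  proof (cases "V = {}")
    case True
    then have "S = {}" and "k_AW k V A"
      using S_sub by (auto simp: k_AW_def)
    then show ?thesis
      by (simp add: numeral_2_eq_2)
  next
    case False
    then obtain us where us: "distinct us" "us \<noteq> []" "set us \<subseteq> V"
      and path: "S = {(us ! a, us ! Suc a) | a. Suc a < length us}"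
      using directed_path_as_nonempty_list[OF assms(4) S_sub] by blast
    have card_S: "card S = length us - 1"
      using card_path_arcs[OF us(1)] path by simp
    obtain p where p: "reversed_path_order (length \<sigma>) (card S) p {(i, j). (\<sigma> ! i, \<sigma> ! j) \<in> A}"
      using reversed_path_order_of_min_fas[OF assms(1) \<sigma> _ us(2,3)] assms(3) path
      unfolding card_S S[symmetric] by blast
    have "k_AW k V A \<longleftrightarrow> toggle_surjective k V A"
      using k_AW_iff_toggle_surjective[OF V] assms(5) by simp
    also have "\<dots> \<longleftrightarrow> toggle_surjective k {..<length \<sigma>} {(i, j). (\<sigma> ! i, \<sigma> ! j) \<in> A}"
      using \<sigma> by (intro toggle_surjective_reindex) (simp add: is_ordering_def bij_betw_nth)
    also have "\<dots> \<longleftrightarrow> coprime k (fib (card S + 2))"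
      using reversed_path_order.toggle_surjective_iff_coprime[OF p] assms(5) by simp
    finally show ?thesis
      by (simp add: coprime_iff_gcd_eq_1)
  qed
qed

end
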